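(* Let $n\ge 3$. There exists an anti-$\mathrm{SL}_2$-tiling of $\mathbb{Z}^n$, and it is unique up to translation: every anti-$\mathrm{SL}_2$-tiling $(b_{\mathbf{i}})$ of $\mathbb{Z}^n$ satisfies $b_{\mathbf{i}}=a_{\mathbf{i}+\mathbf{t}}$ for all $\mathbf{i}$ for some fixed $\mathbf{t}\in\mathbb{Z}^n$, where $a_{\mathbf{i}}=f(i_1+\dots+i_n)$ with $f(r)=F_{2r-1}$ for $r\ge1$ and $f(r)=F_{1-2r}$ for $r\le 0$. In particular, every two-dimensional slice of an anti-$\mathrm{SL}_2$-tiling of $\mathbb{Z}^n$ (obtained by fixing all but two coordinates of $\mathbf{i}$) is a translate of the staircase anti-$\mathrm{SL}_2$-tiling of $\mathbb{Z}^2$ given by $(i,j)\mapsto f(i+j)$, and all entries are odd-indexed Fibonacci numbers.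
   Context: Write $\mathbf{i}=(i_1,\dots,i_n)\in\mathbb{Z}^n$ and $\mathbf{e}_k$ for the $k$-th standard unit vector. An anti-$\mathrm{SL}_2$-tiling of $\mathbb{Z}^n$ is an array $(a_{\mathbf{i}})_{\mathbf{i}\in\mathbb{Z}^n}$ with all $a_{\mathbf{i}}\in\mathbb{Z}_{>0}$ such that for all $\mathbf{i}\in\mathbb{Z}^n$ and all $k\ne\ell$: $a_{\mathbf{i}+\mathbf{e}_\ell}a_{\mathbf{i}+\mathbf{e}_k}-a_{\mathbf{i}}a_{\mathbf{i}+\mathbf{e}_k+\mathbf{e}_\ell}=-1$. Fibonacci numbers are indexed $F_1=1,F_2=1,F_3=2,F_4=3,F_5=5,\dots$ with $F_{m+2}=F_{m+1}+F_m$. *)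

theory Defs
  imports "HOL-Analysis.Analysis" "HOL-Number_Theory.Fib"
begin

text \<open>Points of Z^n are vectors int^'n (n = CARD('n)); the k-th unit vector is axis k 1.\<close>

definition anti_SL2_tiling :: "((int ^ 'n) \<Rightarrow> int) \<Rightarrow> bool" where
  "anti_SL2_tiling a \<longleftrightarrow>
     (\<forall>i. a i > 0) \<and>
     (\<forall>i k l. k \<noteq> l \<longrightarrow>
        a (i + axis l 1) * a (i + axis k 1) - a i * a (i + axis k 1 + axis l 1) = -1)"

definition fibf :: "int \<Rightarrow> int" where
  "fibf r = (if r \<ge> 1 then int (fib (nat (2*r - 1))) else int (fib (nat (1 - 2*r))))"

definition staircase :: "(int ^ 'n) \<Rightarrow> int" where
  "staircase i = fibf (\<Sum>k\<in>UNIV. i $ k)"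

end

theory Submission
  imports Defs
begin

text \<open>Let a be an anti-SL2-tiling of Z^n with n \<ge> 3. For a unit cube spanned by three distinct
  directions k, l, m at a point x, eliminating the entries of the cube from five of its relations
  leaves (a(x+e_k) - a(x+e_l)) (a(x+e_k) a(x+e_l) + 1 + a(x)^2) = 0, so a(x+e_k) = a(x+e_l).
  Hence a(x) depends only on r = i_1 + ... + i_n, say a(x) = h(r), and every relation becomes
  h(r) h(r+2) = h(r+1)^2 + 1. A positive integer solution attains the value 1 at two consecutive
  places (at a minimum m, either a neighbour is also m and then m divides 1, or both neighbours
  exceed m, contradicting h(r-1) h(r+1) = m^2 + 1), and the recursion then forces h to be a
  translate of f. Conversely f satisfies the recursion, being an integer solution of
  f(r+2) + f(r) = 3 f(r+1), for which f(r) f(r+2) - f(r+1)^2 is invariant.\<close>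

lemma int_shift_invariant:
  fixes P :: "int \<Rightarrow> bool"
  assumes "P 0" and "\<And>i. P (i + 1) \<longleftrightarrow> P i"
  shows "P i"
proof (induction i rule: int_induct[where k = 0])
  case (step2 i)
  then show ?case using assms(2)[of "i - 1"] by simp
qed (use assms in auto)

lemma three_term_recurrence_invariant:
  fixes g :: "int \<Rightarrow> 'a::comm_ring_1"
  assumes rec: "\<And>r. g (r + 2) + g r = c * g (r + 1)"
  shows "g r * g (r + 2) - g (r + 1)^2 = g 0 * g 2 - g 1 ^ 2"
proof (rule int_shift_invariant
    [where P = "\<lambda>r. g r * g (r + 2) - g (r + 1)^2 = g 0 * g 2 - g 1 ^ 2"])
  fix i
  have A: "g (i + 3) = c * g (i + 2) - g (i + 1)"
    using rec[of "i + 1"] by (simp add: add.assoc eq_diff_eq)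
  have B: "g i = c * g (i + 1) - g (i + 2)"
    using rec[of i] by (simp add: eq_diff_eq add.commute)
  have "g (i + 1) * g (i + 3) - g (i + 2)^2 = g i * g (i + 2) - g (i + 1)^2"
    unfolding A B by (simp add: algebra_simps power2_eq_square)
  then show "(g (i + 1) * g (i + 1 + 2) - g (i + 1 + 1)^2 = g 0 * g 2 - g 1 ^ 2) \<longleftrightarrow>
      (g i * g (i + 2) - g (i + 1)^2 = g 0 * g 2 - g 1 ^ 2)"
    by (simp add: add.assoc)
qed simp

lemma fib_add_4: "fib (n + 4) + fib n = 3 * fib (n + 2)"
  by (simp add: numeral_eq_Suc)

lemma fibf_pos: "fibf r > 0"
  unfolding fibf_def by (auto intro!: fib_neq_0_nat)

lemma fibf_of_nat: "fibf (int m + 1) = int (fib (2 * m + 1))" "fibf (- int m) = int (fib (2 * m + 1))"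
  unfolding fibf_def by (simp_all add: nat_add_distrib nat_mult_distrib del: fib.simps)

lemma fibf_recurrence: "fibf (r + 2) + fibf r = 3 * fibf (r + 1)"
proof -
  have fib_add_4_int: "int (fib (m + 4)) + int (fib m) = 3 * int (fib (m + 2))" for m
    using arg_cong[OF fib_add_4[of m], of int] by simp
  have odd_index: "2 * (m + 1) + 1 = (2 * m + 1) + 2" "2 * (m + 2) + 1 = (2 * m + 1) + 4" for m :: nat
    by simp_all
  consider m where "r = int m + 1" | "r = 0" | "r = -1" | m where "r = - int (m + 2)"
  proof -
    have "r \<ge> 1 \<or> r = 0 \<or> r = -1 \<or> r \<le> -2" by linarith
    then show thesis
      using that(1)[of "nat (r - 1)"] that(2,3) that(4)[of "nat (- r - 2)"] by auto
  qed
  then show ?thesis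
  proof cases
    case (1 m)
    have shift: "int m + 1 + 1 = int (m + 1) + 1" "int m + 1 + 2 = int (m + 2) + 1" by simp_all
    show ?thesis
      unfolding 1 shift fibf_of_nat(1) odd_index by (rule fib_add_4_int)
  next
    case (4 m)
    have shift: "- int (m + 2) + 1 = - int (m + 1)" "- int (m + 2) + 2 = - int m" by simp_all
    show ?thesis
      unfolding 4 shift fibf_of_nat(2) odd_index by (subst add.commute) (rule fib_add_4_int)
  qed (simp_all add: fibf_def numeral_eq_Suc)
qed

lemma fibf_cassini: "fibf r * fibf (r + 2) = fibf (r + 1)^2 + 1"
  using three_term_recurrence_invariant[of fibf 3 r, OF fibf_recurrence]
  by (simp add: fibf_def numeral_eq_Suc)

lemma fibf_odd_fib: "\<exists>m. odd m \<and> fibf r = int (fib m)"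
proof (cases "r \<ge> 1")
  case True
  then show ?thesis
    unfolding fibf_def by (intro exI[of _ "nat (2 * r - 1)"]) (auto simp: even_nat_iff)
next
  case False
  then show ?thesis
    unfolding fibf_def by (intro exI[of _ "nat (1 - 2 * r)"]) (auto simp: even_nat_iff)
qed

lemma positive_solution_unique:
  fixes g h :: "int \<Rightarrow> int"
  assumes g_pos: "\<And>s. g s > 0" and g_rel: "\<And>s. g s * g (s + 2) = g (s + 1)^2 + 1"
    and h_pos: "\<And>s. h s > 0" and h_rel: "\<And>s. h s * h (s + 2) = h (s + 1)^2 + 1"
    and "g 0 = h 0" "g 1 = h 1"
  shows "g s = h s"
proof -
  have "g s = h s \<and> g (s + 1) = h (s + 1)"
  proof (rule int_shift_invariant[where P = "\<lambda>s. g s = h s \<and> g (s + 1) = h (s + 1)"])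
    fix i
    have "g i * g (i + 2) = h i * h (i + 2)" if "g (i + 1) = h (i + 1)"
      using g_rel[of i] h_rel[of i] that by simp
    then have "g (i + 2) = h (i + 2) \<longleftrightarrow> g i = h i" if "g (i + 1) = h (i + 1)"
      using that g_pos[of i] g_pos[of "i + 2"] by (auto simp: mult.commute)
    then show "(g (i + 1) = h (i + 1) \<and> g (i + 1 + 1) = h (i + 1 + 1)) \<longleftrightarrow>
        (g i = h i \<and> g (i + 1) = h (i + 1))"
      by (auto simp: add.assoc)
  qed (use assms in simp)
  then show ?thesis ..
qed

lemma positive_solution_has_consecutive_ones:
  fixes h :: "int \<Rightarrow> int"
  assumes pos: "\<And>s. h s > 0" and rel: "\<And>s. h s * h (s + 2) = h (s + 1)^2 + 1"
  shows "\<exists>s. h s = 1 \<and> h (s + 1) = 1"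
proof -
  obtain s0 where min: "\<And>s. h s0 \<le> h s"
  proof -
    define M where "M = (LEAST k::nat. \<exists>s. h s = int k)"
    have "\<exists>s. h s = int M"
      unfolding M_def by (rule LeastI[of _ "nat (h 0)"]) (use pos[of 0] in auto)
    then obtain s0 where "h s0 = int M" ..
    moreover have "int M \<le> h s" for s
    proof -
      have "M \<le> nat (h s)" unfolding M_def by (rule Least_le) (use pos[of s] in auto)
      then show ?thesis using pos[of s] by linarith
    qed
    ultimately show thesis using that[of s0] by simp
  qed
  have one_if_repeated: "h s0 = 1" if "h s0 * (h t - h s0) = 1" for t
    using that pos[of s0] by (simp add: pos_zmult_eq_1_iff)
  consider "h (s0 + 1) = h s0" | "h (s0 - 1) = h s0" | "h (s0 + 1) > h s0" "h (s0 - 1) > h s0"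
    using min[of "s0 + 1"] min[of "s0 - 1"] by linarith
  then show ?thesis
  proof cases
    case 1
    then have "h s0 * (h (s0 + 2) - h s0) = 1"
      using rel[of s0] by (simp add: algebra_simps power2_eq_square)
    then have "h s0 = 1" by (rule one_if_repeated)
    then show ?thesis using 1 by auto
  next
    case 2
    then have "h s0 * (h (s0 - 2) - h s0) = 1"
      using rel[of "s0 - 2"] by (simp add: algebra_simps power2_eq_square)
    then have "h s0 = 1" by (rule one_if_repeated)
    then show ?thesis using 2 by (intro exI[of _ "s0 - 1"]) auto
  next
    case 3
    have "(h s0 + 1) * (h s0 + 1) \<le> h (s0 - 1) * h (s0 + 1)"
      using 3 pos[of s0] by (intro mult_mono) auto
    then show ?thesis using rel[of "s0 - 1"] pos[of s0] by (simp add: algebra_simps power2_eq_square)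
  qed
qed

lemma positive_solution_eq_fibf_shift:
  fixes h :: "int \<Rightarrow> int"
  assumes pos: "\<And>s. h s > 0" and rel: "\<And>s. h s * h (s + 2) = h (s + 1)^2 + 1"
  shows "\<exists>s0. \<forall>s. h s = fibf (s - s0)"
proof -
  obtain s0 where "h s0 = 1" "h (s0 + 1) = 1"
    using positive_solution_has_consecutive_ones[OF pos rel] by blast
  have "h (s + s0) = fibf s" for s
  proof (rule positive_solution_unique[of "\<lambda>s. h (s + s0)"])
    show "h (s + s0) * h (s + 2 + s0) = h (s + 1 + s0)^2 + 1" for s
      using rel[of "s + s0"] by (simp add: ac_simps)
    show "h (0 + s0) = fibf 0" "h (1 + s0) = fibf 1"
      using \<open>h s0 = 1\<close> \<open>h (s0 + 1) = 1\<close> by (simp_all add: fibf_def add.commute)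
  qed (use pos fibf_pos fibf_cassini in auto)
  then show ?thesis by (metis diff_add_cancel)
qed

definition coord_sum :: "int ^ 'n \<Rightarrow> int" where
  "coord_sum y = (\<Sum>j\<in>UNIV. y $ j)"

lemma coord_sum_add: "coord_sum (x + y) = coord_sum x + coord_sum y"
  by (simp add: coord_sum_def sum.distrib)

lemma coord_sum_diff: "coord_sum (x - y) = coord_sum x - coord_sum y"
  by (simp add: coord_sum_def sum_subtractf)

lemma coord_sum_axis: "coord_sum (axis k c) = c"
  by (simp add: coord_sum_def axis_def)

lemma staircase_eq_fibf_coord_sum: "staircase y = fibf (coord_sum y)"
  by (simp add: staircase_def coord_sum_def)

lemma coord_sum_slice:
  fixes i :: "int ^ 'n"
  assumes "k \<noteq> l"
  shows "coord_sum (\<chi> j. if j = k then p else if j = l then q else i $ j)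
    = p + q + (\<Sum>j\<in>UNIV - {k, l}. i $ j)"
proof -
  let ?v = "\<chi> j. if j = k then p else if j = l then q else i $ j"
  have "coord_sum ?v = ?v $ k + (?v $ l + (\<Sum>j\<in>UNIV - {k, l}. ?v $ j))"
    unfolding coord_sum_def using assms
    by (simp add: sum.remove[of UNIV k] sum.remove[of "UNIV - {k}" l] Diff_insert2[symmetric]
        insert_commute)
  also have "(\<Sum>j\<in>UNIV - {k, l}. ?v $ j) = (\<Sum>j\<in>UNIV - {k, l}. i $ j)"
    by (rule sum.cong) auto
  finally show ?thesis using assms by simp
qed

lemma exists_third_index:
  assumes "CARD('n) \<ge> 3"
  shows "\<exists>m::'n. m \<noteq> k \<and> m \<noteq> l"
proof (rule ccontr)
  assume "\<not> ?thesis"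
  then have "CARD('n) \<le> card {k, l}" by (intro card_mono) auto
  also have "\<dots> \<le> 2" by (simp add: card_insert_if)
  finally show False using assms by simp
qed

lemma anti_SL2_tilingD:
  assumes "anti_SL2_tiling a"
  shows "a i > 0"
    and "k \<noteq> l \<Longrightarrow> a (i + axis l 1) * a (i + axis k 1) - a i * a (i + axis k 1 + axis l 1) = -1"
  using assms unfolding anti_SL2_tiling_def by auto

lemma unit_cube_relations_imp_eq:
  fixes a0 a1 a2 a3 a12 a13 a23 a123 :: int
  assumes "a2 * a1 - a0 * a12 = -1" "a3 * a1 - a0 * a13 = -1" "a3 * a2 - a0 * a23 = -1"
    and "a13 * a12 - a1 * a123 = -1" "a23 * a12 - a2 * a123 = -1"
    and "a0 > 0" "a1 > 0" "a2 > 0"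
  shows "a1 = a2"
proof -
  have "(a2 - a1) * (a1 * a2 + 1 + a0^2) = 0" using assms(1-5) by algebra
  moreover have "a1 * a2 + 1 + a0^2 > 0" using assms(6-8) by (simp add: add_pos_pos)
  ultimately show ?thesis by simp
qed

lemma anti_SL2_tiling_axis_neighbours_eq:
  fixes a :: "int ^ 'n \<Rightarrow> int"
  assumes a: "anti_SL2_tiling a" and "k \<noteq> l" "k \<noteq> m" "l \<noteq> m"
  shows "a (x + axis k 1) = a (x + axis l 1)"
proof -
  note rel = anti_SL2_tilingD(2)[OF a]
  have "a (x + axis l 1 + axis m 1) * a (x + axis k 1 + axis l 1)
      - a (x + axis l 1) * a (x + axis k 1 + axis l 1 + axis m 1) = -1"
    using rel[of k m "x + axis l 1"] assms by (simp add: add_ac)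
  from unit_cube_relations_imp_eq[OF rel[of k l x] rel[of k m x] rel[of l m x]
      rel[of l m "x + axis k 1"] this anti_SL2_tilingD(1)[OF a] anti_SL2_tilingD(1)[OF a]
      anti_SL2_tilingD(1)[OF a]]
  show ?thesis using assms by auto
qed

lemma coord_sum_eq_imp_exists_gt_lt:
  fixes y z :: "int ^ 'n"
  assumes "coord_sum y = coord_sum z" and "y \<noteq> z"
  shows "\<exists>k l. z $ k < y $ k \<and> y $ l < z $ l"
proof -
  obtain j0 where j0: "y $ j0 \<noteq> z $ j0" using assms(2) by (auto simp: vec_eq_iff)
  have "coord_sum u < coord_sum v"
    if "\<forall>j. u $ j \<le> v $ j" "u $ j0 \<noteq> v $ j0" for u v :: "int ^ 'n"
    unfolding coord_sum_def using that
    by (intro sum_strict_mono_ex1) (auto simp: order.order_iff_strict)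
  then have "\<not> (\<forall>j. y $ j \<le> z $ j)" "\<not> (\<forall>j. z $ j \<le> y $ j)"
    using assms(1) j0 by (metis less_irrefl)+
  then show ?thesis by (auto simp: not_le)
qed

lemma anti_SL2_tiling_move_unit:
  fixes a :: "int ^ 'n \<Rightarrow> int"
  assumes a: "anti_SL2_tiling a" and "CARD('n) \<ge> 3" and "k \<noteq> l"
  shows "a (y - axis k 1 + axis l 1) = a y"
proof -
  obtain m where "m \<noteq> k" "m \<noteq> l" using exists_third_index[OF assms(2)] by blast
  then show ?thesis
    using anti_SL2_tiling_axis_neighbours_eq[OF a \<open>k \<noteq> l\<close>, of m "y - axis k 1"] by simp
qed

lemma anti_SL2_tiling_depends_on_coord_sum:
  fixes a :: "int ^ 'n \<Rightarrow> int"
  assumes a: "anti_SL2_tiling a" and card: "CARD('n) \<ge> 3" and "coord_sum y = coord_sum z"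
  shows "a y = a z"
  using assms(3)
proof (induction "nat (\<Sum>j\<in>UNIV. \<bar>y $ j - z $ j\<bar>)" arbitrary: y rule: less_induct)
  case less
  show ?case
  proof (cases "y = z")
    case False
    then obtain k l where k: "y $ k > z $ k" and l: "y $ l < z $ l"
      using coord_sum_eq_imp_exists_gt_lt[OF less.prems] by blast
    then have "k \<noteq> l" by auto
    define y' where "y' = y - axis k 1 + axis l 1"
    have "y' $ j = y $ j - (if j = k then 1 else 0) + (if j = l then 1 else 0)" for j
      by (simp add: y'_def axis_def)
    then have "(\<Sum>j\<in>UNIV. \<bar>y' $ j - z $ j\<bar>) < (\<Sum>j\<in>UNIV. \<bar>y $ j - z $ j\<bar>)"
      using k l \<open>k \<noteq> l\<close> by (intro sum_strict_mono_ex1) auto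
    then have "nat (\<Sum>j\<in>UNIV. \<bar>y' $ j - z $ j\<bar>) < nat (\<Sum>j\<in>UNIV. \<bar>y $ j - z $ j\<bar>)"
      by (subst nat_less_eq_zless) (auto intro: sum_nonneg)
    moreover have "coord_sum y' = coord_sum z"
      using less.prems by (simp add: y'_def coord_sum_add coord_sum_diff coord_sum_axis)
    ultimately have "a y' = a z"
      by (rule less.hyps)
    moreover have "a y' = a y"
      unfolding y'_def by (rule anti_SL2_tiling_move_unit[OF a card \<open>k \<noteq> l\<close>])
    ultimately show ?thesis by simp
  qed simp
qed

lemma staircase_anti_SL2_tiling: "anti_SL2_tiling (staircase :: int ^ 'n \<Rightarrow> int)"
  unfolding anti_SL2_tiling_def staircase_eq_fibf_coord_sum
  using fibf_cassini fibf_pos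
  by (simp add: coord_sum_add coord_sum_axis power2_eq_square ac_simps)

lemma anti_SL2_tiling_eq_staircase_shift:
  fixes b :: "int ^ 'n \<Rightarrow> int"
  assumes b: "anti_SL2_tiling b" and card: "CARD('n) \<ge> 3"
  shows "\<exists>t. \<forall>i. b i = staircase (i + t)"
proof -
  obtain k l :: 'n where "k \<noteq> l" using exists_third_index[OF card] by blast
  define h where "h s = b (axis k s)" for s
  have b_h: "b y = h (coord_sum y)" for y
    unfolding h_def by (rule anti_SL2_tiling_depends_on_coord_sum[OF b card]) (simp add: coord_sum_axis)
  have "h s * h (s + 2) = h (s + 1)^2 + 1" for s
    using anti_SL2_tilingD(2)[OF b \<open>k \<noteq> l\<close>, of "axis k s"]
    by (simp add: b_h coord_sum_add coord_sum_axis power2_eq_square ac_simps)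
  moreover have "h s > 0" for s
    by (simp add: h_def anti_SL2_tilingD(1)[OF b])
  ultimately obtain s0 where "\<forall>s. h s = fibf (s - s0)"
    using positive_solution_eq_fibf_shift[of h] by blast
  then have "b i = staircase (i + axis k (- s0))" for i
    by (simp add: b_h staircase_eq_fibf_coord_sum coord_sum_add coord_sum_axis)
  then show ?thesis by blast
qed

theorem theorem2p3:
  assumes "CARD('n) \<ge> 3"
  shows "(\<exists>a :: (int ^ 'n) \<Rightarrow> int. anti_SL2_tiling a)
    \<and> (\<forall>b :: (int ^ 'n) \<Rightarrow> int. anti_SL2_tiling b \<longrightarrow>
          (\<exists>t. \<forall>i. b i = staircase (i + t)))
    \<and> (\<forall>b :: (int ^ 'n) \<Rightarrow> int. anti_SL2_tiling b \<longrightarrow>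
          (\<forall>i k l. k \<noteq> l \<longrightarrow>
             (\<exists>u v. \<forall>p q. b (\<chi> j. if j = k then p else if j = l then q else i $ j)
                           = fibf ((p + u) + (q + v)))))
    \<and> (\<forall>b :: (int ^ 'n) \<Rightarrow> int. anti_SL2_tiling b \<longrightarrow>
          (\<forall>i. \<exists>m. odd m \<and> b i = int (fib m)))"
proof (intro conjI allI impI)
  show "\<exists>a :: (int ^ 'n) \<Rightarrow> int. anti_SL2_tiling a"
    using staircase_anti_SL2_tiling by blast
next
  fix b :: "int ^ 'n \<Rightarrow> int" and i :: "int ^ 'n" and k l :: 'n
  assume "anti_SL2_tiling b" "k \<noteq> l"
  then obtain t where "\<forall>i. b i = staircase (i + t)"
    using anti_SL2_tiling_eq_staircase_shift assms by blast
  then show "\<exists>u v. \<forall>p q. b (\<chi> j. if j = k then p else if j = l then q else i $ j)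
      = fibf ((p + u) + (q + v))"
    using coord_sum_slice[OF \<open>k \<noteq> l\<close>, of _ _ i]
    by (intro exI[of _ "(\<Sum>j\<in>UNIV - {k, l}. i $ j) + coord_sum t"] exI[of _ 0])
      (simp add: staircase_eq_fibf_coord_sum coord_sum_add ac_simps)
next
  fix b :: "int ^ 'n \<Rightarrow> int" and i :: "int ^ 'n"
  assume "anti_SL2_tiling b"
  then obtain t where "\<forall>i. b i = staircase (i + t)"
    using anti_SL2_tiling_eq_staircase_shift assms by blast
  then show "\<exists>m. odd m \<and> b i = int (fib m)"
    using fibf_odd_fib by (simp add: staircase_eq_fibf_coord_sum)
qed (use anti_SL2_tiling_eq_staircase_shift assms in blast)

end
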